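(* There is a function $\varepsilon:\mathbb{N}\to[0,\infty)$ with $\varepsilon(n)\to 0$ as $n\to\infty$ such that the following holds for every positive integer $n$. Let $\mathcal{S}\subseteq 2^{[n]}$ be a family of subsets of $[n]=\{1,\dots,n\}$. Suppose that for every $n$-element poset $(P,\preceq_P)$ there is an enumeration $v_1,\dots,v_n$ of the elements of $P$ such that for each $j\in[n]$, $$\{i\in[n]\mid v_i\preceq_P v_j\}\in\mathcal{S}.$$ Then $|\mathcal{S}|\geq 2^{(1-\varepsilon(n))n}$. *)

theory Defs
  imports Complex_Main
begin

end

theory Submission
  imports Defs "HOL-Library.FuncSet" "HOL-Real_Asymp.Real_Asymp"
begin

(* Split [n] into a bottom block B of size n - m and a top block T of size m, with m about sqrt n.
   For each of the 2^((n-m) m) relations E \<subseteq> B \<times> T, the diagonal together with E is a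
   partial order of height two, and E is recovered from the enumeration v (at most n^n choices)
   together with the down-sets of the m elements of T (at most |S|^m choices).  Hence
   2^((n-m) m) \<le> n^n |S|^m, i.e. log |S| \<ge> n - m - (n log n) / m = n - O(sqrt n log n). *)

lemma partial_order_on_Id_on_Un_bipartite:
  assumes "E \<subseteq> B \<times> T" "B \<subseteq> A" "T \<subseteq> A" "B \<inter> T = {}"
  shows "partial_order_on A (Id_on A \<union> E)"
proof -
  have "trans (Id_on A \<union> E)"
    using assms(1,4) unfolding trans_def by blast
  moreover have "antisym (Id_on A \<union> E)"
    using assms(1,4) unfolding antisym_def by blast
  moreover have "refl_on A (Id_on A \<union> E)"
    using assms(1-3) unfolding refl_on_def by blast
  ultimately show ?thesis
    using assms(1-3) by (auto simp: partial_order_on_def preorder_on_def)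
qed

lemma bipartite_relation_eq_image_down_sets:
  assumes "E \<subseteq> B \<times> T" "B \<inter> T = {}" "B \<subseteq> v ` I"
  shows "E = (B \<times> T) \<inter> (\<lambda>(b, i). (v i, b)) ` Sigma T (\<lambda>b. {i \<in> I. (v i, b) \<in> Id_on A \<union> E})"
  using assms by (auto simp: image_iff) blast+

lemma card_Pow_bipartite_le_enumerations_times_down_sets:
  fixes I :: "'i set" and A :: "'a set" and S :: "'i set set"
  assumes "finite I" "finite A" "finite S" "B \<subseteq> A" "T \<subseteq> A" "B \<inter> T = {}"
    and enum: "\<And>R. partial_order_on A R \<Longrightarrow>
      \<exists>v. bij_betw v I A \<and> (\<forall>j \<in> I. {i \<in> I. (v i, v j) \<in> R} \<in> S)"
  shows "2 ^ (card B * card T) \<le> card A ^ card I * card S ^ card T"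
proof -
  define decode where
    "decode v D = (B \<times> T) \<inter> (\<lambda>(b, i). (v i, b)) ` Sigma T D"
    for v :: "'i \<Rightarrow> 'a" and D :: "'a \<Rightarrow> 'i set"
  have decode_onto: "Pow (B \<times> T) \<subseteq> case_prod decode ` ((I \<rightarrow>\<^sub>E A) \<times> (T \<rightarrow>\<^sub>E S))"
  proof
    fix E assume "E \<in> Pow (B \<times> T)"
    then have E: "E \<subseteq> B \<times> T" by simp
    let ?R = "Id_on A \<union> E"
    obtain v where v: "bij_betw v I A" and down: "\<forall>j \<in> I. {i \<in> I. (v i, v j) \<in> ?R} \<in> S"
      using enum[OF partial_order_on_Id_on_Un_bipartite[OF E assms(4-6)]] by blast
    define D where "D b = {i \<in> I. (v i, b) \<in> ?R}" for b
    have "D b \<in> S" if "b \<in> T" for b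
      using down that assms(5) v unfolding D_def bij_betw_def by fastforce
    then have "(restrict v I, restrict D T) \<in> (I \<rightarrow>\<^sub>E A) \<times> (T \<rightarrow>\<^sub>E S)"
      using v by (auto simp: bij_betw_def)
    moreover have "E = decode v D"
      using bipartite_relation_eq_image_down_sets[OF E assms(6)] v assms(4)
      unfolding decode_def D_def bij_betw_def by blast
    moreover have "decode v D = decode (restrict v I) (restrict D T)"
      unfolding decode_def D_def by (auto simp: image_iff)
    ultimately show "E \<in> case_prod decode ` ((I \<rightarrow>\<^sub>E A) \<times> (T \<rightarrow>\<^sub>E S))" by blast
  qed
  have "finite B" "finite T"
    using assms(2,4,5) finite_subset by auto
  have "2 ^ (card B * card T) = card (Pow (B \<times> T))"
    using \<open>finite B\<close> \<open>finite T\<close> by (simp add: card_Pow card_cartesian_product)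
  also have "\<dots> \<le> card (case_prod decode ` ((I \<rightarrow>\<^sub>E A) \<times> (T \<rightarrow>\<^sub>E S)))"
    using decode_onto assms(1-3) \<open>finite T\<close> by (intro card_mono) (auto intro: finite_PiE)
  also have "\<dots> \<le> card ((I \<rightarrow>\<^sub>E A) \<times> (T \<rightarrow>\<^sub>E S))"
    by (rule card_image_le) (use assms(1-3) \<open>finite T\<close> in \<open>auto intro: finite_PiE\<close>)
  also have "\<dots> = card A ^ card I * card S ^ card T"
    using assms(1) \<open>finite T\<close> by (simp add: card_cartesian_product card_PiE)
  finally show ?thesis .
qed

lemma two_powr_le_of_power_le:
  fixes k m n :: nat and c :: real
  assumes "0 < m" "0 < n" "0 \<le> c" and le: "2 ^ (k * m) \<le> real n ^ n * c ^ m"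
  shows "2 powr (real k - real n * log 2 n / real m) \<le> c"
proof -
  have "c \<noteq> 0"
  proof
    assume "c = 0"
    with le \<open>0 < m\<close> have "(2::real) ^ (k * m) \<le> 0" by (simp add: zero_power)
    then show False using zero_less_power[of "2::real" "k * m"] by linarith
  qed
  then have c: "0 < c" using \<open>0 \<le> c\<close> by simp
  have "real (k * m) = log 2 (2 ^ (k * m))"
    by simp
  also have "\<dots> \<le> log 2 (real n ^ n * c ^ m)"
    using le c \<open>0 < n\<close> by (subst log_le_cancel_iff) auto
  also have "\<dots> = real n * log 2 n + real m * log 2 c"
    using c \<open>0 < n\<close> by (simp add: log_mult log_nat_power)
  finally have "real k - real n * log 2 n / real m \<le> log 2 c"
    using \<open>0 < m\<close> by (simp add: field_simps)
  then have "2 powr (real k - real n * log 2 n / real m) \<le> 2 powr log 2 c"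
    by simp
  then show ?thesis
    using c by simp
qed

definition deficit :: "nat \<Rightarrow> real" where
  "deficit n = (sqrt n + 1) / n + log 2 n / sqrt n"

lemma deficit_nonneg: "0 \<le> deficit n"
  by (cases "n = 0") (auto simp: deficit_def)

lemma deficit_tendsto_zero: "deficit \<longlonglongrightarrow> 0"
  unfolding deficit_def by real_asymp

lemma one_minus_deficit_le:
  fixes n m :: nat
  assumes "1 \<le> n" "sqrt n \<le> m" "m \<le> sqrt n + 1"
  shows "(1 - deficit n) * n \<le> (real n - m) - n * log 2 n / m"
proof -
  have sqrt_pos: "0 < sqrt n" using assms(1) by simp
  then have "0 < real m" using assms(2) by linarith
  have "n * log 2 n / m \<le> n * log 2 n / sqrt n"
    using assms sqrt_pos \<open>0 < real m\<close> by (intro divide_left_mono) auto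
  also have "\<dots> = sqrt n * log 2 n"
    using sqrt_pos by (simp add: field_simps)
  finally have "n * log 2 n / m \<le> sqrt n * log 2 n" .
  moreover have "(1 - deficit n) * n = n - (sqrt n + 1) - sqrt n * log 2 n"
    using sqrt_pos assms(1) by (simp add: deficit_def field_simps)
  ultimately show ?thesis
    using assms(3) by linarith
qed

lemma card_ge_two_powr_deficit:
  fixes n :: nat and S :: "nat set set"
  assumes "1 \<le> n" "finite S"
    and enum: "\<And>R. partial_order_on {1..n} R \<Longrightarrow>
      \<exists>v. bij_betw v {1..n} {1..n} \<and> (\<forall>j \<in> {1..n}. {i \<in> {1..n}. (v i, v j) \<in> R} \<in> S)"
  shows "2 powr ((1 - deficit n) * n) \<le> card S"
proof -
  define m where "m = nat \<lceil>sqrt n\<rceil>"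
  have "real m = of_int \<lceil>sqrt n\<rceil>"
    unfolding m_def by simp
  then have m_ge: "sqrt n \<le> m" and m_le: "m \<le> sqrt n + 1"
    using ceiling_correct[of "sqrt n"] by linarith+
  have "sqrt n \<le> sqrt (real n * n)"
    using assms(1) by (intro real_sqrt_le_mono) simp
  then have "m \<le> n"
    unfolding m_def by (simp add: ceiling_le_iff nat_le_iff)
  have "0 < m"
    using m_ge assms(1) by (simp add: m_def)
  have "2 ^ (card {1..n - m} * card {n - m<..n}) \<le> card {1..n} ^ card {1..n} * card S ^ card {n - m<..n}"
    using assms(2) by (intro card_Pow_bipartite_le_enumerations_times_down_sets enum) auto
  then have "2 ^ ((n - m) * m) \<le> n ^ n * card S ^ m"
    using \<open>m \<le> n\<close> by simp
  then have "(2::real) ^ ((n - m) * m) \<le> real n ^ n * real (card S) ^ m"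
    by (metis of_nat_le_iff of_nat_mult of_nat_numeral of_nat_power)
  then have "2 powr (real (n - m) - n * log 2 n / m) \<le> card S"
    using \<open>0 < m\<close> assms(1) by (intro two_powr_le_of_power_le) auto
  moreover have "(1 - deficit n) * n \<le> real (n - m) - n * log 2 n / m"
    using one_minus_deficit_le[OF assms(1) m_ge m_le] \<open>m \<le> n\<close> by (simp add: of_nat_diff)
  ultimately show ?thesis
    by (meson order_trans powr_mono one_le_numeral)
qed

theorem proposition4p1:
  shows "\<exists>\<epsilon> :: nat \<Rightarrow> real. (\<forall>n. \<epsilon> n \<ge> 0) \<and> \<epsilon> \<longlonglongrightarrow> 0 \<and>
    (\<forall>n :: nat. \<forall>S :: nat set set. n \<ge> 1 \<longrightarrow> S \<subseteq> Pow {1..n} \<longrightarrow>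
      (\<forall>(A :: nat set) (R :: (nat \<times> nat) set). card A = n \<longrightarrow> partial_order_on A R \<longrightarrow>
         (\<exists>v. bij_betw v {1..n} A \<and>
              (\<forall>j \<in> {1..n}. {i \<in> {1..n}. (v i, v j) \<in> R} \<in> S))) \<longrightarrow>
      real (card S) \<ge> 2 powr ((1 - \<epsilon> n) * real n))"
proof (intro exI[of _ deficit] conjI allI impI deficit_nonneg deficit_tendsto_zero)
  fix n :: nat and S :: "nat set set"
  assume "1 \<le> n" and "S \<subseteq> Pow {1..n}"
    and enum: "\<forall>(A :: nat set) (R :: (nat \<times> nat) set). card A = n \<longrightarrow> partial_order_on A R \<longrightarrow>
      (\<exists>v. bij_betw v {1..n} A \<and> (\<forall>j \<in> {1..n}. {i \<in> {1..n}. (v i, v j) \<in> R} \<in> S))"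
  have "finite S"
    using \<open>S \<subseteq> Pow {1..n}\<close> finite_subset by blast
  then show "2 powr ((1 - deficit n) * n) \<le> card S"
    using \<open>1 \<le> n\<close> enum by (intro card_ge_two_powr_deficit) auto
qed

end
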